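(* Let $n\ge2$, $\beta\in\mathbb{R}$, and let $\omega_1,\dots,\omega_{n-1}$ be real numbers such that all sums $\sum_{i=m}^p\omega_i$ ($1\le m\le p\le n-1$) are nonzero. Then $$\int_0^\beta d\beta_1\int_0^{\beta_1}d\beta_2\cdots\int_0^{\beta_{n-1}}d\beta_n\,\exp\Big(-\sum_{j=1}^{n-1}\beta_j\omega_j+\beta_n\sum_{j=1}^{n-1}\omega_j\Big)$$ $$=\frac{1}{\prod_{k=1}^{n-1}\sum_{j=1}^k\omega_j}\Big(\beta-\sum_{k=1}^{n-1}\frac{1}{\sum_{j=1}^k\omega_j}\Big)-\sum_{p=1}^{n-1}\frac{(-1)^p\,e^{-\beta\sum_{i=1}^p\omega_i}}{\Big(\prod_{m=2}^p\sum_{i=m}^p\omega_i\Big)\Big(\sum_{r=1}^p\omega_r\Big)^2\Big(\prod_{k=p+1}^{n-1}\sum_{j=p+1}^k\omega_j\Big)},$$ where empty products equal $1$. *)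

theory Defs
  imports "HOL-Analysis.Analysis"
begin

fun nested_int :: "nat \<Rightarrow> (real list \<Rightarrow> real) \<Rightarrow> real list \<Rightarrow> real \<Rightarrow> real" where
  "nested_int 0 f xs b = f xs"
| "nested_int (Suc k) f xs b =
     (LBINT t = ereal 0 .. ereal b. nested_int k f (xs @ [t]) t)"

end

theory Submission
  imports Defs
begin

text \<open>
  Put S 0 = 0, S q = -(\<omega> 1 + ... + \<omega> q) for 0 < q < n, and S n = 0; the integrand is then
  exp (\<Sum>j. (S j - S (j - 1)) \<beta>_j). The iterated integral of such an exponential over a
  simplex is the divided difference of x \<mapsto> exp (\<beta> x) at the nodes S q (Hermite-Genocchi):
  one more integration adds a node, because multiplying by x - y a removes the node a from a
  divided difference, and the constant of integration vanishes because divided differences of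
  constants are zero. This handles the inner n - 1 integrals, whose nodes S 1, ..., S n are
  distinct by hypothesis. The outermost integral, where S 0 = S n, is done by hand: it gives
  the linear term plus divided differences of exp (\<beta> x) / x^2 and 1 / x^2 at the nonzero
  nodes. The latter is a partial fraction identity and yields the constant term; the former,
  written out, is the exponential sum.
\<close>

definition divided_diff :: "(real \<Rightarrow> real) \<Rightarrow> ('a \<Rightarrow> real) \<Rightarrow> 'a set \<Rightarrow> real" where
  "divided_diff g y I = (\<Sum>p\<in>I. g (y p) / (\<Prod>q\<in>I - {p}. y p - y q))"

lemma divided_diff_cong:
  "(\<And>p. p \<in> I \<Longrightarrow> g (y p) = h (y p)) \<Longrightarrow> divided_diff g y I = divided_diff h y I"
  unfolding divided_diff_def by (rule sum.cong) auto

lemma divided_diff_singleton [simp]: "divided_diff g y {a} = g (y a)"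
  by (simp add: divided_diff_def)

lemma divided_diff_add:
  "divided_diff (\<lambda>x. g x + h x) y I = divided_diff g y I + divided_diff h y I"
  by (simp add: divided_diff_def add_divide_distrib sum.distrib)

lemma divided_diff_diff:
  "divided_diff (\<lambda>x. g x - h x) y I = divided_diff g y I - divided_diff h y I"
  by (simp add: divided_diff_def diff_divide_distrib sum_subtractf)

lemma divided_diff_cmult:
  "divided_diff (\<lambda>x. c * g x) y I = c * divided_diff g y I"
  by (simp add: divided_diff_def sum_distrib_left)

lemma divided_diff_remove_node:
  assumes "finite I" and "a \<in> I"
  shows "divided_diff g y I
    = g (y a) / (\<Prod>q\<in>I - {a}. y a - y q) + divided_diff (\<lambda>x. g x / (x - y a)) y (I - {a})"
proof -
  have "(\<Prod>q\<in>I - {p}. y p - y q) = (y p - y a) * (\<Prod>q\<in>I - {a} - {p}. y p - y q)"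
    if "p \<in> I - {a}" for p
    using that assms by (subst prod.remove[of _ a]) (auto simp: Diff_insert2 [symmetric] insert_commute)
  then show ?thesis
    unfolding divided_diff_def using assms
    by (subst sum.remove[of _ a]) (auto intro!: sum.cong)
qed

lemma divided_diff_mult_node:
  assumes "finite I" and "inj_on y I" and "a \<in> I"
  shows "divided_diff (\<lambda>x. (x - y a) * g x) y I = divided_diff g y (I - {a})"
proof -
  have "y p \<noteq> y a" if "p \<in> I - {a}" for p
    using that assms(2,3) by (auto dest: inj_onD)
  then show ?thesis
    by (simp add: divided_diff_remove_node[OF assms(1,3)]) (rule divided_diff_cong; auto)
qed

lemma divided_diff_const:
  assumes "finite I" and "inj_on y I" and "2 \<le> card I"
  shows "divided_diff (\<lambda>_. c) y I = 0"
  using assms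
proof (induction "card I" arbitrary: I c rule: less_induct)
  case less
  obtain a b where ab: "a \<in> I" "b \<in> I" "a \<noteq> b"
    using less.prems(3) by (auto simp: numeral_2_eq_2 card_le_Suc_iff)
  have yab: "y b - y a \<noteq> 0"
    using less.prems(2) ab by (auto dest: inj_onD)
  define d where "d = c / (y b - y a)"
  have "(x - y a) * d - (x - y b) * d = (y b - y a) * d" for x
    by (simp add: algebra_simps)
  then have "divided_diff (\<lambda>_. c) y I = divided_diff (\<lambda>x. (x - y a) * d - (x - y b) * d) y I"
    using yab by (simp add: d_def)
  also have "\<dots> = divided_diff (\<lambda>_. d) y (I - {a}) - divided_diff (\<lambda>_. d) y (I - {b})"
    using less.prems(1,2) ab
    by (simp add: divided_diff_diff divided_diff_mult_node[where g = "\<lambda>_. d"])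
  also have "\<dots> = 0"
  proof (cases "card I = 2")
    case True
    then have "I - {a} = {b}" and "I - {b} = {a}"
      using ab less.prems(1) by (auto simp: card_2_iff)
    then show ?thesis by simp
  next
    case False
    then show ?thesis
      using less ab by (simp add: inj_on_diff card_Diff1_less)
  qed
  finally show ?case .
qed

lemma divided_diff_inverse:
  assumes "finite I" and "I \<noteq> {}" and "inj_on y I" and "z \<notin> y ` I"
  shows "divided_diff (\<lambda>x. 1 / (z - x)) y I = 1 / (\<Prod>q\<in>I. z - y q)"
  using assms
proof (induction I rule: finite_ne_induct)
  case (singleton a)
  then show ?case by simp
next
  case (insert a J)
  define v where "v = z - y a"
  have v: "v \<noteq> 0"
    using insert.prems by (auto simp: v_def)
  have "divided_diff (\<lambda>x. 1 / (z - x)) y (insert a J)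
      = divided_diff (\<lambda>x. 1 / v * (1 + (x - y a) * (1 / (z - x)))) y (insert a J)"
  proof (rule divided_diff_cong)
    fix p assume "p \<in> insert a J"
    then have u: "z - y p \<noteq> 0"
      using insert.prems by auto
    have shift: "y p - y a = v - (z - y p)"
      by (simp add: v_def)
    have key: "1 / u = 1 / v * (1 + (v - u) * (1 / u))" if "u \<noteq> 0" for u
      using that v by (simp add: field_simps)
    show "1 / (z - y p) = 1 / v * (1 + (y p - y a) * (1 / (z - y p)))"
      unfolding shift by (rule key[OF u])
  qed
  also have "\<dots> = 1 / v * (divided_diff (\<lambda>_. 1) y (insert a J)
      + divided_diff (\<lambda>x. (x - y a) * (1 / (z - x))) y (insert a J))"
    by (simp only: divided_diff_cmult divided_diff_add)
  also have "\<dots> = 1 / v * divided_diff (\<lambda>x. 1 / (z - x)) y J"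
    using insert
    by (subst divided_diff_mult_node) (auto simp: divided_diff_const card_insert_if Suc_le_eq card_gt_0_iff)
  finally show ?case
    using insert by (simp add: v_def)
qed

lemma divided_diff_inverse_square:
  assumes "finite I" and "inj_on y I" and "z \<notin> y ` I"
  shows "divided_diff (\<lambda>x. 1 / (z - x)\<^sup>2) y I = (\<Sum>q\<in>I. 1 / (z - y q)) / (\<Prod>q\<in>I. z - y q)"
  using assms
proof (induction I rule: finite_induct)
  case empty
  then show ?case by (simp add: divided_diff_def)
next
  case (insert a J)
  define v where "v = z - y a"
  have v: "v \<noteq> 0"
    using insert.prems by (auto simp: v_def)
  have "divided_diff (\<lambda>x. 1 / (z - x)\<^sup>2) y (insert a J)
      = divided_diff (\<lambda>x. 1 / v * (1 / (z - x) + (x - y a) * (1 / (z - x)\<^sup>2))) y (insert a J)"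
  proof (rule divided_diff_cong)
    fix p assume "p \<in> insert a J"
    then have u: "z - y p \<noteq> 0"
      using insert.prems by auto
    have shift: "y p - y a = v - (z - y p)"
      by (simp add: v_def)
    have key: "1 / u\<^sup>2 = 1 / v * (1 / u + (v - u) * (1 / u\<^sup>2))" if "u \<noteq> 0" for u
      using that v by (simp add: field_simps power2_eq_square)
    show "1 / (z - y p)\<^sup>2 = 1 / v * (1 / (z - y p) + (y p - y a) * (1 / (z - y p)\<^sup>2))"
      unfolding shift by (rule key[OF u])
  qed
  also have "\<dots> = 1 / v * (divided_diff (\<lambda>x. 1 / (z - x)) y (insert a J)
      + divided_diff (\<lambda>x. (x - y a) * (1 / (z - x)\<^sup>2)) y (insert a J))"
    by (simp only: divided_diff_cmult divided_diff_add)
  also have "\<dots> = 1 / v * (1 / (v * (\<Prod>q\<in>J. z - y q)) + divided_diff (\<lambda>x. 1 / (z - x)\<^sup>2) y J)"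
    using insert by (subst divided_diff_mult_node) (auto simp: divided_diff_inverse v_def)
  also have "\<dots> = (1 / v + (\<Sum>q\<in>J. 1 / (z - y q))) / (v * (\<Prod>q\<in>J. z - y q))"
  proof -
    have "(\<Prod>q\<in>J. z - y q) \<noteq> 0"
      using insert by auto
    then show ?thesis
      using insert v by (simp add: field_simps)
  qed
  finally show ?case
    using insert by (simp add: v_def)
qed

lemma DERIV_divided_diff:
  assumes "\<And>x. ((\<lambda>b. h b x) has_real_derivative h' x) (at b within X)"
  shows "((\<lambda>b. divided_diff (h b) y I) has_real_derivative divided_diff h' y I) (at b within X)"
  unfolding divided_diff_def by (intro DERIV_sum DERIV_cdivide assms)

lemma continuous_on_divided_diff:
  assumes "\<And>x. continuous_on A (\<lambda>t. h t x)"
  shows "continuous_on A (\<lambda>t. divided_diff (h t) y I)"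
  unfolding divided_diff_def divide_inverse by (intro continuous_intros assms)

lemma interval_integral_FTC_DERIV:
  fixes G g :: "real \<Rightarrow> real"
  assumes "\<And>t. (G has_real_derivative g t) (at t)" and "continuous_on UNIV g"
  shows "(LBINT t=ereal a..ereal b. g t) = G b - G a"
proof (rule interval_integral_FTC_finite)
  show "continuous_on {min a b..max a b} g"
    using assms(2) by (rule continuous_on_subset) simp
  show "(G has_vector_derivative g t) (at t within {min a b..max a b})" for t
    using has_field_derivative_at_within[OF assms(1)]
    by (simp add: has_real_derivative_iff_has_vector_derivative)
qed

lemma nested_int_exp_eq_divided_diff:
  fixes S :: "nat \<Rightarrow> real"
  assumes "length xs + k = N" and "inj_on S {length xs..N}"
  shows "nested_int k (\<lambda>ys. exp (\<Sum>j<N. (S (Suc j) - S j) * ys ! j)) xs b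
    = exp (\<Sum>j<length xs. (S (Suc j) - S j) * xs ! j)
      * divided_diff (\<lambda>x. exp (b * (x - S (length xs)))) S {length xs..N}"
  using assms
proof (induction k arbitrary: xs b)
  case 0
  then show ?case by simp
next
  case (Suc k)
  define f where "f = (\<lambda>ys. exp (\<Sum>j<N. (S (Suc j) - S j) * ys ! j))"
  define L where "L = length xs"
  define E where "E = exp (\<Sum>j<L. (S (Suc j) - S j) * xs ! j)"
  define g where "g t = E * divided_diff (\<lambda>x. exp (t * (x - S L))) S {Suc L..N}" for t
  define G where "G b = E * divided_diff (\<lambda>x. exp (b * (x - S L))) S {L..N}" for b
  have nodes: "finite {L..N}" "inj_on S {L..N}" "L \<in> {L..N}" "{L..N} - {L} = {Suc L..N}"
    using Suc.prems by (auto simp: L_def)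
  have inner: "nested_int k f (xs @ [t]) t = g t" for t
  proof -
    have "nested_int k f (xs @ [t]) t
        = exp (\<Sum>j<Suc L. (S (Suc j) - S j) * (xs @ [t]) ! j)
          * divided_diff (\<lambda>x. exp (t * (x - S (Suc L)))) S {Suc L..N}"
      unfolding f_def using Suc.IH[of "xs @ [t]" t] Suc.prems(1) nodes(2)
      by (simp add: L_def inj_on_subset)
    also have "exp (\<Sum>j<Suc L. (S (Suc j) - S j) * (xs @ [t]) ! j) = E * exp ((S (Suc L) - S L) * t)"
      by (simp add: E_def L_def nth_append exp_add)
    also have "E * exp ((S (Suc L) - S L) * t) * divided_diff (\<lambda>x. exp (t * (x - S (Suc L)))) S {Suc L..N} = g t"
      by (simp add: g_def exp_add[symmetric] algebra_simps flip: divided_diff_cmult)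
    finally show ?thesis .
  qed
  have "(G has_real_derivative g t) (at t)" for t
  proof -
    have "(G has_real_derivative E * divided_diff (\<lambda>x. (x - S L) * exp (t * (x - S L))) S {L..N}) (at t)"
      unfolding G_def by (intro DERIV_cmult DERIV_divided_diff derivative_eq_intros) auto
    then show ?thesis
      by (simp add: g_def divided_diff_mult_node[OF nodes(1-3)] nodes(4))
  qed
  moreover have "continuous_on UNIV g"
    unfolding g_def by (intro continuous_intros continuous_on_divided_diff)
  ultimately have "nested_int (Suc k) f xs b = G b - G 0"
    by (simp add: inner interval_integral_FTC_DERIV)
  moreover have "G 0 = 0"
    using nodes Suc.prems(1) by (simp add: G_def L_def divided_diff_const)
  ultimately show ?case
    by (simp add: f_def G_def L_def E_def)
qed

lemma nested_int_exp_eq_integral_divided_diff: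
  fixes S :: "nat \<Rightarrow> real"
  assumes "S 0 = 0" and "inj_on S {1..Suc N}"
  shows "nested_int (Suc N) (\<lambda>ys. exp (\<Sum>j<Suc N. (S (Suc j) - S j) * ys ! j)) [] \<beta>
    = (LBINT t=ereal 0..ereal \<beta>. divided_diff (\<lambda>x. exp (t * x)) S {1..Suc N})"
proof -
  have "nested_int N (\<lambda>ys. exp (\<Sum>j<Suc N. (S (Suc j) - S j) * ys ! j)) [t] t
      = divided_diff (\<lambda>x. exp (t * x)) S {1..Suc N}" for t
    using nested_int_exp_eq_divided_diff[of "[t]" N "Suc N" S t] assms
    by (simp add: exp_add[symmetric] algebra_simps flip: divided_diff_cmult)
  then show ?thesis
    by simp
qed

lemma interval_integral_divided_diff_exp:
  assumes "finite I" and "inj_on y I" and "a \<in> I" and "y a = 0"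
  shows "(LBINT t=ereal 0..ereal \<beta>. divided_diff (\<lambda>x. exp (t * x)) y I)
    = \<beta> / (\<Prod>q\<in>I - {a}. - y q) + divided_diff (\<lambda>x. (exp (\<beta> * x) - 1) / x\<^sup>2) y (I - {a})"
proof -
  define H where "H b = b / (\<Prod>q\<in>I - {a}. - y q) + divided_diff (\<lambda>x. (exp (b * x) - 1) / x\<^sup>2) y (I - {a})"
    for b
  have nonzero: "y p \<noteq> 0" if "p \<in> I - {a}" for p
    using that assms(2-4) inj_onD[of y I p a] by auto
  have "(H has_real_derivative divided_diff (\<lambda>x. exp (t * x)) y I) (at t)" for t
  proof -
    have "(H has_real_derivative 1 / (\<Prod>q\<in>I - {a}. - y q)
        + divided_diff (\<lambda>x. x * exp (t * x) / x\<^sup>2) y (I - {a})) (at t)"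
    proof (unfold H_def, intro DERIV_add DERIV_divided_diff DERIV_cdivide)
      show "((\<lambda>b. b) has_real_derivative 1) (at t)"
        by (rule DERIV_ident)
      show "((\<lambda>b. exp (b * x) - 1) has_real_derivative x * exp (t * x)) (at t)" for x
        by (auto intro!: derivative_eq_intros)
    qed
    moreover have "divided_diff (\<lambda>x. x * exp (t * x) / x\<^sup>2) y (I - {a})
        = divided_diff (\<lambda>x. exp (t * x) / (x - y a)) y (I - {a})"
      using nonzero assms(4) by (intro divided_diff_cong) (simp add: power2_eq_square)
    ultimately show ?thesis
      using assms by (simp add: divided_diff_remove_node[of I a])
  qed
  moreover have "continuous_on UNIV (\<lambda>t. divided_diff (\<lambda>x. exp (t * x)) y I)"
    by (intro continuous_intros continuous_on_divided_diff)
  ultimately have "(LBINT t=ereal 0..ereal \<beta>. divided_diff (\<lambda>x. exp (t * x)) y I) = H \<beta> - H 0"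
    by (rule interval_integral_FTC_DERIV)
  then show ?thesis
    by (simp add: H_def divided_diff_def)
qed

lemma sum_diff_nat_atLeastAtMost:
  fixes f :: "nat \<Rightarrow> 'a::ab_group_add"
  assumes "l \<le> Suc m" and "m \<le> p"
  shows "sum f {l..p} - sum f {l..m} = sum f {Suc m..p}"
  using assms(2) by (induction p) (use assms(1) in \<open>auto simp: le_Suc_eq\<close>)

lemma prod_partial_sum_diffs:
  fixes \<omega> :: "nat \<Rightarrow> real"
  assumes "1 \<le> p" and "p \<le> N"
  shows "(\<Prod>q\<in>{1..N} - {p}. (\<Sum>i=1..q. \<omega> i) - (\<Sum>i=1..p. \<omega> i))
    = (-1) ^ (p - 1) * (\<Prod>m=2..p. \<Sum>i=m..p. \<omega> i) * (\<Prod>k=p+1..N. \<Sum>j=p+1..k. \<omega> j)"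
proof -
  have split: "{1..N} - {p} = {1..<p} \<union> {p+1..N}"
    using assms by auto
  have "(\<Prod>q\<in>{1..<p}. (\<Sum>i=1..q. \<omega> i) - (\<Sum>i=1..p. \<omega> i)) = (\<Prod>q\<in>{1..<p}. - (\<Sum>i=Suc q..p. \<omega> i))"
  proof (rule prod.cong[OF refl])
    fix q assume "q \<in> {1..<p}"
    then have "q \<le> p" by simp
    then show "(\<Sum>i=1..q. \<omega> i) - (\<Sum>i=1..p. \<omega> i) = - (\<Sum>i=Suc q..p. \<omega> i)"
      using sum_diff_nat_atLeastAtMost[of 1 q p \<omega>] by linarith
  qed
  also have "\<dots> = (-1) ^ (p - 1) * (\<Prod>m=2..p. \<Sum>i=m..p. \<omega> i)"
  proof -
    have "(\<Prod>q\<in>{1..<p}. \<Sum>i=Suc q..p. \<omega> i) = (\<Prod>m=2..p. \<Sum>i=m..p. \<omega> i)"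
      using assms(1) by (intro prod.reindex_bij_witness[of _ "\<lambda>m. m - 1" Suc]) auto
    then show ?thesis
      by (simp add: prod_uminus)
  qed
  finally have lower: "(\<Prod>q\<in>{1..<p}. (\<Sum>i=1..q. \<omega> i) - (\<Sum>i=1..p. \<omega> i))
      = (-1) ^ (p - 1) * (\<Prod>m=2..p. \<Sum>i=m..p. \<omega> i)" .
  have upper: "(\<Prod>k\<in>{p+1..N}. (\<Sum>i=1..k. \<omega> i) - (\<Sum>i=1..p. \<omega> i)) = (\<Prod>k=p+1..N. \<Sum>j=p+1..k. \<omega> j)"
    by (intro prod.cong refl) (simp add: sum_diff_nat_atLeastAtMost)
  have "(\<Prod>q\<in>{1..<p} \<union> {p+1..N}. (\<Sum>i=1..q. \<omega> i) - (\<Sum>i=1..p. \<omega> i))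
      = (\<Prod>q\<in>{1..<p}. (\<Sum>i=1..q. \<omega> i) - (\<Sum>i=1..p. \<omega> i))
        * (\<Prod>k\<in>{p+1..N}. (\<Sum>i=1..k. \<omega> i) - (\<Sum>i=1..p. \<omega> i))"
    by (rule prod.union_disjoint) auto
  then show ?thesis
    unfolding split lower upper .
qed

lemma divided_diff_exp_partial_sums:
  fixes \<omega> y :: "nat \<Rightarrow> real"
  assumes "\<And>q. 1 \<le> q \<Longrightarrow> q \<le> N \<Longrightarrow> y q = - (\<Sum>i=1..q. \<omega> i)"
  shows "divided_diff (\<lambda>x. exp (\<beta> * x) / x\<^sup>2) y {1..N}
    = - (\<Sum>p=1..N. (-1) ^ p * exp (- \<beta> * (\<Sum>i=1..p. \<omega> i)) /
          ((\<Prod>m=2..p. \<Sum>i=m..p. \<omega> i) * (\<Sum>r=1..p. \<omega> r) ^ 2 * (\<Prod>k=p+1..N. \<Sum>j=p+1..k. \<omega> j)))"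
  unfolding divided_diff_def sum_negf[symmetric]
proof (rule sum.cong[OF refl])
  fix p assume p: "p \<in> {1..N}"
  have "(\<Prod>q\<in>{1..N} - {p}. y p - y q) = (\<Prod>q\<in>{1..N} - {p}. (\<Sum>i=1..q. \<omega> i) - (\<Sum>i=1..p. \<omega> i))"
    using p by (intro prod.cong refl) (auto simp: assms)
  also have "\<dots> = (-1) ^ (p - 1) * (\<Prod>m=2..p. \<Sum>i=m..p. \<omega> i) * (\<Prod>k=p+1..N. \<Sum>j=p+1..k. \<omega> j)"
    using p by (intro prod_partial_sum_diffs) auto
  finally have denominator: "(\<Prod>q\<in>{1..N} - {p}. y p - y q)
      = (-1) ^ (p - 1) * (\<Prod>m=2..p. \<Sum>i=m..p. \<omega> i) * (\<Prod>k=p+1..N. \<Sum>j=p+1..k. \<omega> j)" .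
  have y: "exp (\<beta> * y p) = exp (- \<beta> * (\<Sum>i=1..p. \<omega> i))" "(y p)\<^sup>2 = (\<Sum>i=1..p. \<omega> i)\<^sup>2"
    using p assms[of p] by simp_all
  have sign: "(-1) ^ p = - ((-1) ^ (p - 1) :: real)" "(-1) ^ (p - 1) = (1::real) \<or> (-1) ^ (p - 1) = (-1::real)"
    using p by (cases p) (simp_all add: minus_one_power_iff)
  have sign_cancel: "e / a\<^sup>2 / (s * d1 * d3) = - ((- s) * e / (d1 * a\<^sup>2 * d3))"
    if "s = 1 \<or> s = -1" for s e a d1 d3 :: real
    using that by (elim disjE) (simp_all add: mult_ac)
  show "exp (\<beta> * y p) / (y p)\<^sup>2 / (\<Prod>q\<in>{1..N} - {p}. y p - y q)
      = - ((-1) ^ p * exp (- \<beta> * (\<Sum>i=1..p. \<omega> i)) /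
          ((\<Prod>m=2..p. \<Sum>i=m..p. \<omega> i) * (\<Sum>r=1..p. \<omega> r) ^ 2 * (\<Prod>k=p+1..N. \<Sum>j=p+1..k. \<omega> j)))"
    unfolding denominator y sign(1) by (rule sign_cancel[OF sign(2)])
qed

lemma partial_sums_distinct:
  fixes \<omega> :: "nat \<Rightarrow> real"
  assumes "\<And>m p. 1 \<le> m \<Longrightarrow> m \<le> p \<Longrightarrow> p \<le> N \<Longrightarrow> (\<Sum>i=m..p. \<omega> i) \<noteq> 0"
    and "p < q" and "q \<le> N"
  shows "(\<Sum>i=1..p. \<omega> i) \<noteq> (\<Sum>i=1..q. \<omega> i)"
  using assms(1)[of "Suc p" q] assms(2,3) sum_diff_nat_atLeastAtMost[of 1 p q \<omega>] by auto

lemma divided_diff_partial_sums: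
  fixes \<omega> y :: "nat \<Rightarrow> real"
  assumes sums: "\<And>m p. 1 \<le> m \<Longrightarrow> m \<le> p \<Longrightarrow> p \<le> N \<Longrightarrow> (\<Sum>i=m..p. \<omega> i) \<noteq> 0"
    and y: "\<And>q. 1 \<le> q \<Longrightarrow> q \<le> N \<Longrightarrow> y q = - (\<Sum>i=1..q. \<omega> i)"
  shows "divided_diff (\<lambda>x. (exp (\<beta> * x) - 1) / x\<^sup>2) y {1..N}
    = - (\<Sum>p=1..N. (-1) ^ p * exp (- \<beta> * (\<Sum>i=1..p. \<omega> i)) /
          ((\<Prod>m=2..p. \<Sum>i=m..p. \<omega> i) * (\<Sum>r=1..p. \<omega> r) ^ 2 * (\<Prod>k=p+1..N. \<Sum>j=p+1..k. \<omega> j)))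
      - (\<Sum>k=1..N. 1 / (\<Sum>j=1..k. \<omega> j)) / (\<Prod>k=1..N. \<Sum>j=1..k. \<omega> j)"
proof -
  have inj: "inj_on y {1..N}"
  proof (rule linorder_inj_onI')
    fix p q assume "p \<in> {1..N}" "q \<in> {1..N}" "p < q"
    then show "y p \<noteq> y q"
      using partial_sums_distinct[where N = N, OF sums \<open>p < q\<close>] by (simp add: y)
  qed
  have zero: "0 \<notin> y ` {1..N}"
  proof
    assume "0 \<in> y ` {1..N}"
    then obtain q where "q \<in> {1..N}" and "y q = 0"
      by auto
    then show False
      using partial_sums_distinct[where N = N, OF sums, where p = 0 and q = q] by (simp add: y)
  qed
  have "divided_diff (\<lambda>x. (exp (\<beta> * x) - 1) / x\<^sup>2) y {1..N}
      = divided_diff (\<lambda>x. exp (\<beta> * x) / x\<^sup>2) y {1..N} - divided_diff (\<lambda>x. 1 / (0 - x)\<^sup>2) y {1..N}"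
    unfolding divided_diff_diff[symmetric] by (simp add: diff_divide_distrib)
  also have "divided_diff (\<lambda>x. exp (\<beta> * x) / x\<^sup>2) y {1..N}
      = - (\<Sum>p=1..N. (-1) ^ p * exp (- \<beta> * (\<Sum>i=1..p. \<omega> i)) /
          ((\<Prod>m=2..p. \<Sum>i=m..p. \<omega> i) * (\<Sum>r=1..p. \<omega> r) ^ 2 * (\<Prod>k=p+1..N. \<Sum>j=p+1..k. \<omega> j)))"
    by (rule divided_diff_exp_partial_sums) (rule y)
  also have "divided_diff (\<lambda>x. 1 / (0 - x)\<^sup>2) y {1..N}
      = (\<Sum>k=1..N. 1 / (\<Sum>j=1..k. \<omega> j)) / (\<Prod>k=1..N. \<Sum>j=1..k. \<omega> j)"
    using divided_diff_inverse_square[OF _ inj zero] by (simp add: y)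
  finally show ?thesis .
qed

definition exponent_nodes :: "nat \<Rightarrow> (nat \<Rightarrow> real) \<Rightarrow> nat \<Rightarrow> real" where
  "exponent_nodes n \<omega> q = (if q < n then - (\<Sum>i=1..q. \<omega> i) else 0)"

lemma exponent_eq_exponent_nodes:
  "- (\<Sum>j=1..N. bs ! (j - 1) * \<omega> j) + bs ! N * (\<Sum>j=1..N. \<omega> j)
    = (\<Sum>j<Suc N. (exponent_nodes (Suc N) \<omega> (Suc j) - exponent_nodes (Suc N) \<omega> j) * bs ! j)"
proof -
  have "(\<Sum>j<N. (exponent_nodes (Suc N) \<omega> (Suc j) - exponent_nodes (Suc N) \<omega> j) * bs ! j)
      = - (\<Sum>j=1..N. bs ! (j - 1) * \<omega> j)"
    by (simp add: sum.atLeast1_atMost_eq exponent_nodes_def sum_negf[symmetric] mult.commute)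
  then show ?thesis
    by (simp add: exponent_nodes_def mult.commute)
qed

lemma inj_on_exponent_nodes:
  fixes \<omega> :: "nat \<Rightarrow> real"
  assumes "\<And>m p. 1 \<le> m \<Longrightarrow> m \<le> p \<Longrightarrow> p \<le> N \<Longrightarrow> (\<Sum>i=m..p. \<omega> i) \<noteq> 0"
  shows "inj_on (exponent_nodes (Suc N) \<omega>) {1..Suc N}"
proof (rule linorder_inj_onI')
  fix p q assume "p \<in> {1..Suc N}" and "q \<in> {1..Suc N}" and "p < q"
  then consider "q \<le> N" | "q = Suc N"
    by fastforce
  then show "exponent_nodes (Suc N) \<omega> p \<noteq> exponent_nodes (Suc N) \<omega> q"
  proof cases
    case 1
    then show ?thesis
      using partial_sums_distinct[where N = N, OF assms \<open>p < q\<close>] \<open>p < q\<close> by (simp add: exponent_nodes_def)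
  next
    case 2
    moreover have "0 < p" and "p \<le> N"
      using \<open>p \<in> {1..Suc N}\<close> \<open>p < q\<close> 2 by auto
    ultimately show ?thesis
      using partial_sums_distinct[where N = N, OF assms \<open>0 < p\<close>] by (simp add: exponent_nodes_def)
  qed
qed

lemma nested_int_exp_partial_sums:
  fixes \<omega> :: "nat \<Rightarrow> real"
  assumes "\<And>m p. 1 \<le> m \<Longrightarrow> m \<le> p \<Longrightarrow> p \<le> N \<Longrightarrow> (\<Sum>i=m..p. \<omega> i) \<noteq> 0"
  shows "nested_int (Suc N) (\<lambda>bs. exp (- (\<Sum>j=1..N. bs ! (j - 1) * \<omega> j) + bs ! N * (\<Sum>j=1..N. \<omega> j))) [] \<beta>
    = \<beta> / (\<Prod>k=1..N. \<Sum>j=1..k. \<omega> j)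
      + divided_diff (\<lambda>x. (exp (\<beta> * x) - 1) / x\<^sup>2) (exponent_nodes (Suc N) \<omega>) {1..N}"
proof -
  define S where "S = exponent_nodes (Suc N) \<omega>"
  have inj: "inj_on S {1..Suc N}"
    unfolding S_def by (rule inj_on_exponent_nodes[OF assms])
  have "nested_int (Suc N) (\<lambda>bs. exp (- (\<Sum>j=1..N. bs ! (j - 1) * \<omega> j) + bs ! N * (\<Sum>j=1..N. \<omega> j))) [] \<beta>
      = (LBINT t=ereal 0..ereal \<beta>. divided_diff (\<lambda>x. exp (t * x)) S {1..Suc N})"
    unfolding exponent_eq_exponent_nodes S_def[symmetric]
    by (rule nested_int_exp_eq_integral_divided_diff[OF _ inj]) (simp add: S_def exponent_nodes_def)
  also have "\<dots> = \<beta> / (\<Prod>q\<in>{1..N}. - S q) + divided_diff (\<lambda>x. (exp (\<beta> * x) - 1) / x\<^sup>2) S {1..N}"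
    using interval_integral_divided_diff_exp[OF _ inj, of "Suc N" \<beta>]
    by (simp add: S_def exponent_nodes_def atLeastAtMostSuc_conv)
  finally show ?thesis
    by (simp add: S_def exponent_nodes_def)
qed

theorem mainTheorem4:
  fixes n :: nat and \<beta> :: real and \<omega> :: "nat \<Rightarrow> real"
  assumes "n \<ge> 2"
    and "\<And>m p. 1 \<le> m \<Longrightarrow> m \<le> p \<Longrightarrow> p \<le> n - 1 \<Longrightarrow> (\<Sum>i=m..p. \<omega> i) \<noteq> 0"
  shows "nested_int n
           (\<lambda>bs. exp (- (\<Sum>j=1..n-1. bs ! (j - 1) * \<omega> j) + bs ! (n - 1) * (\<Sum>j=1..n-1. \<omega> j)))
           [] \<beta>
       = 1 / (\<Prod>k=1..n-1. \<Sum>j=1..k. \<omega> j) * (\<beta> - (\<Sum>k=1..n-1. 1 / (\<Sum>j=1..k. \<omega> j)))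
         - (\<Sum>p=1..n-1. (-1) ^ p * exp (- \<beta> * (\<Sum>i=1..p. \<omega> i)) /
              ((\<Prod>m=2..p. \<Sum>i=m..p. \<omega> i) * (\<Sum>r=1..p. \<omega> r) ^ 2
               * (\<Prod>k=p+1..n-1. \<Sum>j=p+1..k. \<omega> j)))"
proof -
  obtain N where n: "n = Suc N"
    using assms(1) by (cases n) auto
  have sums: "\<And>m p. 1 \<le> m \<Longrightarrow> m \<le> p \<Longrightarrow> p \<le> N \<Longrightarrow> (\<Sum>i=m..p. \<omega> i) \<noteq> 0"
    using assms(2) by (simp add: n)
  have nodes: "\<And>q. 1 \<le> q \<Longrightarrow> q \<le> N \<Longrightarrow> exponent_nodes (Suc N) \<omega> q = - (\<Sum>i=1..q. \<omega> i)"
    by (simp add: exponent_nodes_def)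
  have "divided_diff (\<lambda>x. (exp (\<beta> * x) - 1) / x\<^sup>2) (exponent_nodes (Suc N) \<omega>) {1..N}
    = - (\<Sum>p=1..N. (-1) ^ p * exp (- \<beta> * (\<Sum>i=1..p. \<omega> i)) /
          ((\<Prod>m=2..p. \<Sum>i=m..p. \<omega> i) * (\<Sum>r=1..p. \<omega> r) ^ 2 * (\<Prod>k=p+1..N. \<Sum>j=p+1..k. \<omega> j)))
      - (\<Sum>k=1..N. 1 / (\<Sum>j=1..k. \<omega> j)) / (\<Prod>k=1..N. \<Sum>j=1..k. \<omega> j)"
    by (rule divided_diff_partial_sums[where N = N, OF sums nodes])
  then show ?thesis
    using nested_int_exp_partial_sums[where N = N, OF sums, of \<beta>]
    by (simp add: n diff_divide_distrib)
qed

end
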